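(* Let $\mathcal C=\mathrm{code}(\mathcal H,X)\subseteq2^{[n]}$ be a stable hyperplane code. Then $\mathcal C$ has no chamber obstructions: there is no maximal face $\sigma$ of $\mathrm{cham}(\mathcal C)$ for which there exist two distinct faces $T_1\neq T_2$ of $\Gamma(\mathcal C)$ with $\operatorname{link}_{T_1}\Gamma(\mathcal C)=\operatorname{link}_{T_2}\Gamma(\mathcal C)=\Gamma(2^\sigma)$.
   Context: A code is a subset $\mathcal C\subseteq 2^{[n]}$. An oriented affine hyperplane in $\mathbb R^d$ is $H=\{x:w\cdot x-h=0\}$, $w\ne0$, with $H^+=\{w\cdot x-h>0\}$, $H^-=\{w\cdot x-h<0\}$. For $\mathcal H=\{H_1,\dots,H_n\}$ and open convex $X\subseteq\mathbb R^d$, the atom of $\sigma\subseteq[n]$ is $A_\sigma=\bigl(\bigcap_{i\in\sigma}(H_i^+\cap X)\bigr)\setminus\bigcup_{j\notin\sigma}H_j^+$ ($A_\emptyset=X\setminus\bigcup_iH_i^+$), and $\mathrm{code}(\mathcal H,X)=\{\sigma:A_\sigma\ne\emptyset\}$. $(\mathcal H,X)$ is stable if $X$ is open convex and whenever $X\cap\bigcap_{i\in\sigma}H_i\ne\emptyset$, $\dim\bigcap_{i\in\sigma}H_i=d-|\sigma|$; a stable hyperplane code is the code of a stable pair. Polar complex: vertex set $[n]\sqcup\{\bar1,\dots,\bar n\}$; $\Sigma(\sigma)=\sigma\sqcup\{\bar i:i\notin\sigma\}$; $\Gamma(\mathcal C)$ is the complex of all subsets of $\Sigma(\sigma)$, $\sigma\in\mathcal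 C$. For a face $T$, its support $\underline T$ is the set of $i\in[n]$ such that $i\in T$ or $\bar i\in T$. For $S\subseteq[n]$, $\Gamma(2^S)$ is the complex on $S\sqcup\{\bar i:i\in S\}$ whose faces are all subsets containing no pair $\{i,\bar i\}$ ($\Gamma(2^\emptyset)=\{\emptyset\}$). $\operatorname{link}_T\Delta=\{\nu\in\Delta:\nu\cap T=\emptyset,\nu\cup T\in\Delta\}$. The combinatorial chamber complex $\mathrm{cham}(\mathcal C)$ is the set of $\sigma\subseteq[n]$ for which there exists $T\in\Gamma(\mathcal C)$ with $\underline T=[n]\setminus\sigma$ and $\operatorname{link}_T\Gamma(\mathcal C)=\Gamma(2^\sigma)$; it is a simplicial complex. *)

theory Defs
  imports "HOL-Analysis.Analysis"
begin

text \<open>Ground set [n] = {1..n}. A hyperplane arrangement H_1..H_n in a euclidean space 'a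
  is given by normal vectors w i and offsets h i: H_i = {x. w i \<bullet> x - h i = 0}.\<close>

definition hyp :: "(nat \<Rightarrow> 'a::euclidean_space) \<Rightarrow> (nat \<Rightarrow> real) \<Rightarrow> nat \<Rightarrow> 'a set" where
  "hyp w h i = {x. w i \<bullet> x - h i = 0}"

definition hyp_pos :: "(nat \<Rightarrow> 'a::euclidean_space) \<Rightarrow> (nat \<Rightarrow> real) \<Rightarrow> nat \<Rightarrow> 'a set" where
  "hyp_pos w h i = {x. w i \<bullet> x - h i > 0}"

definition atom :: "nat \<Rightarrow> (nat \<Rightarrow> 'a::euclidean_space) \<Rightarrow> (nat \<Rightarrow> real) \<Rightarrow> 'a set \<Rightarrow> nat set \<Rightarrow> 'a set" where
  "atom n w h X \<sigma> = (X \<inter> (\<Inter>i\<in>\<sigma>. hyp_pos w h i)) - (\<Union>j\<in>{1..n} - \<sigma>. hyp_pos w h j)"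

definition hcode :: "nat \<Rightarrow> (nat \<Rightarrow> 'a::euclidean_space) \<Rightarrow> (nat \<Rightarrow> real) \<Rightarrow> 'a set \<Rightarrow> nat set set" where
  "hcode n w h X = {\<sigma>. \<sigma> \<subseteq> {1..n} \<and> atom n w h X \<sigma> \<noteq> {}}"

definition stable_pair :: "nat \<Rightarrow> (nat \<Rightarrow> 'a::euclidean_space) \<Rightarrow> (nat \<Rightarrow> real) \<Rightarrow> 'a set \<Rightarrow> bool" where
  "stable_pair n w h X \<longleftrightarrow> (\<forall>i\<in>{1..n}. w i \<noteq> 0) \<and> open X \<and> convex X \<and>
     (\<forall>\<sigma>. \<sigma> \<subseteq> {1..n} \<longrightarrow> X \<inter> (\<Inter>i\<in>\<sigma>. hyp w h i) \<noteq> {} \<longrightarrow>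
        aff_dim (\<Inter>i\<in>\<sigma>. hyp w h i) = int DIM('a) - int (card \<sigma>))"

text \<open>Polar complex: vertex i is Inl i, vertex bar i is Inr i.\<close>

definition polar_face :: "nat \<Rightarrow> nat set \<Rightarrow> (nat + nat) set" where
  "polar_face n \<sigma> = Inl ` \<sigma> \<union> Inr ` ({1..n} - \<sigma>)"

definition polar_complex :: "nat \<Rightarrow> nat set set \<Rightarrow> (nat + nat) set set" where
  "polar_complex n C = {T. \<exists>\<sigma>\<in>C. T \<subseteq> polar_face n \<sigma>}"

definition supp :: "(nat + nat) set \<Rightarrow> nat set" where
  "supp T = {i. Inl i \<in> T \<or> Inr i \<in> T}"

definition full_polar :: "nat set \<Rightarrow> (nat + nat) set set" where
  "full_polar S = {T. T \<subseteq> Inl ` S \<union> Inr ` S \<and> \<not> (\<exists>i. Inl i \<in> T \<and> Inr i \<in> T)}"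

definition link :: "'v set \<Rightarrow> 'v set set \<Rightarrow> 'v set set" where
  "link T \<Delta> = {\<nu>\<in>\<Delta>. \<nu> \<inter> T = {} \<and> \<nu> \<union> T \<in> \<Delta>}"

definition cham :: "nat \<Rightarrow> nat set set \<Rightarrow> nat set set" where
  "cham n C = {\<sigma>. \<exists>T\<in>polar_complex n C. supp T = {1..n} - \<sigma> \<and>
                     link T (polar_complex n C) = full_polar \<sigma>}"

definition chamber_obstruction :: "nat \<Rightarrow> nat set set \<Rightarrow> nat set \<Rightarrow> bool" where
  "chamber_obstruction n C \<sigma> \<longleftrightarrow>
     \<sigma> \<in> cham n C \<and> (\<forall>\<tau>\<in>cham n C. \<sigma> \<subseteq> \<tau> \<longrightarrow> \<tau> = \<sigma>) \<and>
     (\<exists>T1\<in>polar_complex n C. \<exists>T2\<in>polar_complex n C. T1 \<noteq> T2 \<and>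
        link T1 (polar_complex n C) = full_polar \<sigma> \<and> link T2 (polar_complex n C) = full_polar \<sigma>)"

end

theory Submission
  imports Defs
begin

text \<open>A stable arrangement realises, at every point \<open>y\<close> of \<open>X\<close>, every sign pattern on the
  hyperplanes through \<open>y\<close> (their normals are independent), so the set of those hyperplanes is a
  face of the chamber complex. If two faces \<open>T\<^sub>1 \<noteq> T\<^sub>2\<close> of the polar complex had the same link
  \<open>\<Gamma>(2\<^sup>\<sigma>)\<close>, they would disagree in the sign of some \<open>j \<notin> \<sigma>\<close>; both links give points of \<open>X\<close>
  on all hyperplanes of \<open>\<sigma>\<close>, one on each side of \<open>H\<^sub>j\<close>, so by convexity some point of \<open>X\<close> lies on
  \<open>H\<^sub>j\<close> and on all of \<open>\<sigma>\<close>, and the hyperplanes through it form a face of the chamber complex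
  strictly containing \<open>\<sigma>\<close>. Hence \<open>\<sigma>\<close> is not maximal.\<close>

lemma inner_affine_combination:
  fixes a x y :: "'a::real_inner"
  assumes "u + v = 1"
  shows "a \<bullet> (u *\<^sub>R x + v *\<^sub>R y) - b = u * (a \<bullet> x - b) + v * (a \<bullet> y - b)"
proof -
  have "b = u * b + v * b" using assms by (metis distrib_right mult_1)
  then show ?thesis by (simp add: inner_add_right algebra_simps)
qed

lemma convex_segment_hits_hyperplane:
  fixes K :: "'a::real_inner set" and w :: "'i \<Rightarrow> 'a"
  assumes K: "convex K" and x1: "x1 \<in> K" and x2: "x2 \<in> K"
    and k: "h k < w k \<bullet> x1" "w k \<bullet> x2 \<le> h k"
  shows "\<exists>y\<in>K. w k \<bullet> y = h k
    \<and> (\<forall>i. w i \<bullet> x1 = h i \<and> w i \<bullet> x2 = h i \<longrightarrow> w i \<bullet> y = h i)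
    \<and> (\<forall>i. h i < w i \<bullet> x1 \<and> h i < w i \<bullet> x2 \<longrightarrow> h i < w i \<bullet> y)
    \<and> (\<forall>i. w i \<bullet> x1 \<le> h i \<and> w i \<bullet> x2 \<le> h i \<longrightarrow> w i \<bullet> y \<le> h i)"
proof -
  define a where "a = w k \<bullet> x1 - h k"
  define b where "b = w k \<bullet> x2 - h k"
  define u where "u = - b / (a - b)"
  define v where "v = a / (a - b)"
  have ab: "0 < a" "b \<le> 0" using k by (simp_all add: a_def b_def)
  then have "0 < a - b" by simp
  then have uv: "0 \<le> u" "0 \<le> v" "u + v = 1"
    using ab by (simp_all add: u_def v_def divide_simps)
  have "u * a + v * b = 0" by (simp add: u_def v_def divide_simps)
  define y where "y = u *\<^sub>R x1 + v *\<^sub>R x2"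
  have y_affine: "w i \<bullet> y - h i = u * (w i \<bullet> x1 - h i) + v * (w i \<bullet> x2 - h i)" for i
    unfolding y_def using uv(3) by (rule inner_affine_combination)
  have "y \<in> K" unfolding y_def using K x1 x2 uv by (rule convexD)
  moreover have "w k \<bullet> y = h k"
    using y_affine[of k] \<open>u * a + v * b = 0\<close> unfolding a_def b_def by linarith
  moreover have "w i \<bullet> y = h i" if "w i \<bullet> x1 = h i" "w i \<bullet> x2 = h i" for i
    using y_affine[of i] that by simp
  moreover have "h i < w i \<bullet> y" if "h i < w i \<bullet> x1" "h i < w i \<bullet> x2" for i
    using convex_bound_lt[of "h i - w i \<bullet> x1" 0 "h i - w i \<bullet> x2" u v] y_affine[of i] that uv
    by (simp add: algebra_simps)
  moreover have "w i \<bullet> y \<le> h i" if "w i \<bullet> x1 \<le> h i" "w i \<bullet> x2 \<le> h i" for i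
    using convex_bound_le[of "w i \<bullet> x1 - h i" 0 "w i \<bullet> x2 - h i" u v] y_affine[of i] that uv
    by simp
  ultimately show ?thesis by blast
qed

text \<open>Induction on the set \<open>G\<close> of hyperplanes already hit: for each new hyperplane \<open>k\<close>, the points
  for the patterns \<open>r \<union> {k}\<close> and \<open>r\<close> lie on opposite sides of \<open>H\<^sub>k\<close>, and their segment meets it.\<close>

lemma convex_common_zero_of_sign_patterns:
  fixes K :: "'a::real_inner set" and w :: "'i \<Rightarrow> 'a"
  assumes K: "convex K" and F: "finite F"
    and patterns: "\<And>r. r \<subseteq> F \<Longrightarrow>
      \<exists>x\<in>K. (\<forall>i\<in>r. h i < w i \<bullet> x) \<and> (\<forall>i\<in>F - r. w i \<bullet> x \<le> h i)"
  shows "\<exists>x\<in>K. \<forall>i\<in>F. w i \<bullet> x = h i"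
proof -
  have "\<forall>r \<subseteq> F - G. \<exists>x\<in>K. (\<forall>i\<in>G. w i \<bullet> x = h i) \<and> (\<forall>i\<in>r. h i < w i \<bullet> x)
          \<and> (\<forall>i\<in>F - G - r. w i \<bullet> x \<le> h i)" if "G \<subseteq> F" for G
    using finite_subset[OF that F] that
  proof (induction G rule: finite_induct)
    case empty
    then show ?case using patterns by simp
  next
    case (insert k G)
    have IH: "\<forall>r \<subseteq> F - G. \<exists>x\<in>K. (\<forall>i\<in>G. w i \<bullet> x = h i) \<and> (\<forall>i\<in>r. h i < w i \<bullet> x)
        \<and> (\<forall>i\<in>F - G - r. w i \<bullet> x \<le> h i)"
      using insert.IH insert.prems by simp
    show ?case
    proof (intro allI impI)
      fix r assume r: "r \<subseteq> F - insert k G"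
      then have "insert k r \<subseteq> F - G" "r \<subseteq> F - G" using insert.prems insert.hyps(2) by auto
      obtain x1 where x1: "x1 \<in> K" "\<forall>i\<in>G. w i \<bullet> x1 = h i" "\<forall>i\<in>insert k r. h i < w i \<bullet> x1"
          "\<forall>i\<in>F - G - insert k r. w i \<bullet> x1 \<le> h i"
        using IH[rule_format, OF \<open>insert k r \<subseteq> F - G\<close>] by blast
      obtain x2 where x2: "x2 \<in> K" "\<forall>i\<in>G. w i \<bullet> x2 = h i" "\<forall>i\<in>r. h i < w i \<bullet> x2"
          "\<forall>i\<in>F - G - r. w i \<bullet> x2 \<le> h i"
        using IH[rule_format, OF \<open>r \<subseteq> F - G\<close>] by blast
      have "k \<in> F - G - r" using r insert.prems insert.hyps(2) by auto
      then have k: "h k < w k \<bullet> x1" "w k \<bullet> x2 \<le> h k" using x1(3) x2(4) by auto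
      obtain y where y: "y \<in> K" "w k \<bullet> y = h k"
        and eq: "\<forall>i. w i \<bullet> x1 = h i \<and> w i \<bullet> x2 = h i \<longrightarrow> w i \<bullet> y = h i"
        and pos: "\<forall>i. h i < w i \<bullet> x1 \<and> h i < w i \<bullet> x2 \<longrightarrow> h i < w i \<bullet> y"
        and nonpos: "\<forall>i. w i \<bullet> x1 \<le> h i \<and> w i \<bullet> x2 \<le> h i \<longrightarrow> w i \<bullet> y \<le> h i"
        using convex_segment_hits_hyperplane[where w = w and h = h, OF K x1(1) x2(1) k] by blast
      have "\<forall>i\<in>insert k G. w i \<bullet> y = h i" using y(2) eq x1(2) x2(2) by blast
      moreover have "\<forall>i\<in>r. h i < w i \<bullet> y" using pos x1(3) x2(3) by blast
      moreover have "\<forall>i\<in>F - insert k G - r. w i \<bullet> y \<le> h i" using nonpos x1(4) x2(4) by blast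
      ultimately show "\<exists>x\<in>K. (\<forall>i\<in>insert k G. w i \<bullet> x = h i) \<and> (\<forall>i\<in>r. h i < w i \<bullet> x)
          \<and> (\<forall>i\<in>F - insert k G - r. w i \<bullet> x \<le> h i)"
        using y(1) by blast
    qed
  qed
  from this[of F] show ?thesis by auto
qed

lemma inner_system_solvable_if_dual_vectors:
  fixes w :: "'i \<Rightarrow> 'a::real_inner"
  assumes S: "finite S"
    and dual: "\<And>i. i \<in> S \<Longrightarrow> \<exists>u. (\<forall>k\<in>S - {i}. w k \<bullet> u = 0) \<and> w i \<bullet> u \<noteq> 0"
  shows "\<exists>v. \<forall>i\<in>S. w i \<bullet> v = c i"
proof -
  obtain U where U: "\<And>i. i \<in> S \<Longrightarrow> (\<forall>k\<in>S - {i}. w k \<bullet> U i = 0) \<and> w i \<bullet> U i \<noteq> 0"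
    using dual by metis
  define v where "v = (\<Sum>i\<in>S. (c i / (w i \<bullet> U i)) *\<^sub>R U i)"
  have "w k \<bullet> v = c k" if k: "k \<in> S" for k
  proof -
    have "w k \<bullet> v = (\<Sum>i\<in>S. c i / (w i \<bullet> U i) * (w k \<bullet> U i))"
      unfolding v_def by (simp add: inner_sum_right)
    also have "\<dots> = c k / (w k \<bullet> U k) * (w k \<bullet> U k)
        + (\<Sum>i\<in>S - {k}. c i / (w i \<bullet> U i) * (w k \<bullet> U i))"
      using k S by (simp add: sum.remove)
    also have "(\<Sum>i\<in>S - {k}. c i / (w i \<bullet> U i) * (w k \<bullet> U i)) = 0"
      using U k by (intro sum.neutral) auto
    finally show ?thesis using U[OF k] by simp
  qed
  then show ?thesis by blast
qed

definition active_hyps :: "nat \<Rightarrow> (nat \<Rightarrow> 'a::real_inner) \<Rightarrow> (nat \<Rightarrow> real) \<Rightarrow> 'a \<Rightarrow> nat set" where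
  "active_hyps n w h y = {i \<in> {1..n}. w i \<bullet> y = h i}"

lemma mem_atom:
  "x \<in> atom n w h X \<tau> \<longleftrightarrow>
     x \<in> X \<and> (\<forall>i\<in>\<tau>. h i < w i \<bullet> x) \<and> (\<forall>j\<in>{1..n} - \<tau>. w j \<bullet> x \<le> h j)"
  by (auto simp: atom_def hyp_pos_def not_less)

text \<open>Stability makes the active normals at a point linearly independent: dropping one active
  hyperplane raises the dimension of the intersection, which yields a dual vector.\<close>

lemma stable_pair_active_dual_vector:
  assumes st: "stable_pair n w h X" and y: "y \<in> X" and i: "i \<in> active_hyps n w h y"
  shows "\<exists>u. (\<forall>k\<in>active_hyps n w h y - {i}. w k \<bullet> u = 0) \<and> w i \<bullet> u \<noteq> 0"
proof -
  define S where "S = active_hyps n w h y"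
  have S: "finite S" "S \<subseteq> {1..n}" and yS: "\<forall>k\<in>S. w k \<bullet> y = h k"
    by (auto simp: S_def active_hyps_def)
  have aff_dim: "aff_dim (\<Inter>k\<in>F. hyp w h k) = int DIM('a) - int (card F)" if "F \<subseteq> S" for F
  proof -
    have "y \<in> X \<inter> (\<Inter>k\<in>F. hyp w h k)" using that y yS by (auto simp: hyp_def)
    then show ?thesis using st that S(2) unfolding stable_pair_def by blast
  qed
  have "card (S - {i}) < card S" using S(1) i unfolding S_def by (rule card_Diff1_less)
  then have "aff_dim (\<Inter>k\<in>S. hyp w h k) \<noteq> aff_dim (\<Inter>k\<in>S - {i}. hyp w h k)"
    using aff_dim[of S] aff_dim[of "S - {i}"] by auto
  then have "(\<Inter>k\<in>S. hyp w h k) \<noteq> (\<Inter>k\<in>S - {i}. hyp w h k)" by metis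
  moreover have "(\<Inter>k\<in>S. hyp w h k) \<subseteq> (\<Inter>k\<in>S - {i}. hyp w h k)" by blast
  ultimately obtain p where p: "p \<in> (\<Inter>k\<in>S - {i}. hyp w h k)" "p \<notin> (\<Inter>k\<in>S. hyp w h k)"
    by blast
  have "\<forall>k\<in>S - {i}. w k \<bullet> (p - y) = 0" "w i \<bullet> (p - y) \<noteq> 0"
    using p i yS by (auto simp: hyp_def inner_diff_right S_def)
  then show ?thesis unfolding S_def by blast
qed

lemma stable_pair_active_system_solvable:
  assumes "stable_pair n w h X" and "y \<in> X"
  shows "\<exists>v. \<forall>i\<in>active_hyps n w h y. w i \<bullet> v = c i"
proof -
  have "finite (active_hyps n w h y)" by (simp add: active_hyps_def)
  then show ?thesis
    using stable_pair_active_dual_vector[OF assms] by (rule inner_system_solvable_if_dual_vectors)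
qed

lemma eventually_less_iff_of_tendsto:
  fixes f :: "'b \<Rightarrow> 'a::linorder_topology"
  assumes f: "(f \<longlongrightarrow> l) F" and "l \<noteq> c"
  shows "\<forall>\<^sub>F t in F. c < f t \<longleftrightarrow> c < l"
proof (cases "c < l")
  case True
  then show ?thesis using order_tendstoD(1)[OF f True] by (auto elim: eventually_mono)
next
  case False
  then have "l < c" using \<open>l \<noteq> c\<close> by auto
  then show ?thesis using False order_tendstoD(2)[OF f \<open>l < c\<close>]
    by (auto elim: eventually_mono)
qed

text \<open>Moving from \<open>y\<close> a little along a vector that is positive on the normals in \<open>s\<close> and
  negative on the other active normals realises the sign pattern \<open>s\<close> without changing the
  strict signs at \<open>y\<close>.\<close>

lemma stable_pair_atom_near_point:
  assumes st: "stable_pair n w h X" and y: "y \<in> X" and s: "s \<subseteq> active_hyps n w h y"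
  shows "atom n w h X (s \<union> {j \<in> {1..n}. h j < w j \<bullet> y}) \<noteq> {}"
proof -
  define S where "S = active_hyps n w h y"
  obtain v where v: "\<forall>i\<in>S. w i \<bullet> v = (if i \<in> s then 1 else -1)"
    using stable_pair_active_system_solvable[OF st y, of "\<lambda>i. if i \<in> s then 1 else -1"]
    unfolding S_def by blast
  have "((\<lambda>t. y + t *\<^sub>R v) \<longlongrightarrow> y + 0 *\<^sub>R v) (at_right 0)"
    by (intro tendsto_intros)
  then have lim: "((\<lambda>t. y + t *\<^sub>R v) \<longlongrightarrow> y) (at_right 0)" by simp
  have in_X: "\<forall>\<^sub>F t in at_right 0. y + t *\<^sub>R v \<in> X"
    using topological_tendstoD[OF lim] st y by (simp add: stable_pair_def)
  have sign_kept: "\<forall>\<^sub>F t in at_right 0. h j < w j \<bullet> (y + t *\<^sub>R v) \<longleftrightarrow> h j < w j \<bullet> y"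
    if "j \<in> {1..n} - S" for j
  proof (rule eventually_less_iff_of_tendsto)
    show "((\<lambda>t. w j \<bullet> (y + t *\<^sub>R v)) \<longlongrightarrow> w j \<bullet> y) (at_right 0)"
      by (intro tendsto_intros lim)
    show "w j \<bullet> y \<noteq> h j" using that by (simp add: S_def active_hyps_def)
  qed
  have "\<forall>\<^sub>F t in at_right 0. \<forall>j\<in>{1..n} - S. h j < w j \<bullet> (y + t *\<^sub>R v) \<longleftrightarrow> h j < w j \<bullet> y"
    using sign_kept by (intro eventually_ball_finite) auto
  then have "\<forall>\<^sub>F t in at_right 0. 0 < t \<and> y + t *\<^sub>R v \<in> X \<and>
      (\<forall>j\<in>{1..n} - S. h j < w j \<bullet> (y + t *\<^sub>R v) \<longleftrightarrow> h j < w j \<bullet> y)"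
    using eventually_at_right_less in_X by (intro eventually_conj)
  then obtain t where t: "0 < t" "y + t *\<^sub>R v \<in> X"
      and t_sign: "\<forall>j\<in>{1..n} - S. h j < w j \<bullet> (y + t *\<^sub>R v) \<longleftrightarrow> h j < w j \<bullet> y"
    using eventually_happens'[of "at_right (0::real)"] by auto
  have on_S: "w i \<bullet> (y + t *\<^sub>R v) = h i + t * (if i \<in> s then 1 else -1)" if "i \<in> S" for i
    using v that by (simp add: S_def active_hyps_def inner_add_right)
  have "S \<subseteq> {1..n}" "s \<subseteq> S" using s by (auto simp: S_def active_hyps_def)
  then have "y + t *\<^sub>R v \<in> atom n w h X (s \<union> {j \<in> {1..n}. h j < w j \<bullet> y})"
    using t t_sign on_S unfolding mem_atom
    by (auto simp: S_def active_hyps_def)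
  then show ?thesis by blast
qed

lemma Inl_mem_polar_face [simp]: "Inl i \<in> polar_face n \<tau> \<longleftrightarrow> i \<in> \<tau>"
  by (auto simp: polar_face_def)

lemma Inr_mem_polar_face [simp]: "Inr i \<in> polar_face n \<tau> \<longleftrightarrow> i \<in> {1..n} \<and> i \<notin> \<tau>"
  by (auto simp: polar_face_def)

lemma polar_face_no_opposite_vertices: "\<not> (Inl i \<in> polar_face n \<tau> \<and> Inr i \<in> polar_face n \<tau>)"
  by simp

lemma link_sign_vector_subset_full_polar:
  assumes C: "C \<subseteq> Pow {1..n}"
  shows "link (Inl ` P \<union> Inr ` ({1..n} - S - P)) (polar_complex n C) \<subseteq> full_polar S"
    (is "link ?T _ \<subseteq> _")
proof
  fix \<nu> assume "\<nu> \<in> link ?T (polar_complex n C)"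
  then obtain \<tau> where disj: "\<nu> \<inter> ?T = {}" and \<tau>: "\<tau> \<in> C" "\<nu> \<union> ?T \<subseteq> polar_face n \<tau>"
    by (auto simp: link_def polar_complex_def)
  have "\<tau> \<subseteq> {1..n}" using C \<tau>(1) by blast
  have Inl_S: "i \<in> S" if "Inl i \<in> \<nu>" for i
  proof -
    have "i \<in> \<tau>" using that \<tau>(2) by auto
    moreover have "Inl i \<notin> ?T" "Inr i \<notin> ?T" using that disj \<tau>(2) \<open>i \<in> \<tau>\<close> by auto
    ultimately show ?thesis using \<open>\<tau> \<subseteq> {1..n}\<close> by blast
  qed
  have Inr_S: "i \<in> S" if "Inr i \<in> \<nu>" for i
  proof -
    have "i \<in> {1..n}" "i \<notin> \<tau>" using that \<tau>(2) by auto
    moreover have "Inl i \<notin> ?T" "Inr i \<notin> ?T" using that disj \<tau>(2) \<open>i \<notin> \<tau>\<close> by auto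
    ultimately show ?thesis by blast
  qed
  have "\<nu> \<subseteq> Inl ` S \<union> Inr ` S"
  proof
    fix x assume "x \<in> \<nu>"
    then show "x \<in> Inl ` S \<union> Inr ` S" by (cases x) (auto dest: Inl_S Inr_S)
  qed
  moreover have "\<not> (Inl i \<in> \<nu> \<and> Inr i \<in> \<nu>)" for i
    using \<tau>(2) polar_face_no_opposite_vertices by blast
  ultimately show "\<nu> \<in> full_polar S" unfolding full_polar_def by blast
qed

lemma full_polar_subset_link_sign_vector:
  assumes C: "C \<subseteq> Pow {1..n}" and SP: "S \<inter> P = {}"
    and ext: "\<And>s. s \<subseteq> S \<Longrightarrow> s \<union> P \<in> C"
  shows "full_polar S \<subseteq> link (Inl ` P \<union> Inr ` ({1..n} - S - P)) (polar_complex n C)"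
    (is "_ \<subseteq> link ?T _")
proof
  fix \<nu> assume \<nu>: "\<nu> \<in> full_polar S"
  define s where "s = {i. Inl i \<in> \<nu>}"
  have \<nu>_sub: "\<nu> \<subseteq> Inl ` S \<union> Inr ` S" and \<nu>_cons: "\<And>i. \<not> (Inl i \<in> \<nu> \<and> Inr i \<in> \<nu>)"
    using \<nu> unfolding full_polar_def by auto
  have "s \<subseteq> S" using \<nu>_sub unfolding s_def by auto
  have "S \<subseteq> {1..n}" using ext[of S] C by auto
  have "x \<in> polar_face n (s \<union> P)" if "x \<in> \<nu> \<union> ?T" for x
  proof (cases x)
    case (Inl i)
    then show ?thesis using that unfolding s_def by auto
  next
    case (Inr i)
    then have "i \<in> S \<and> i \<notin> s \<or> i \<in> {1..n} - S - P"
      using that \<nu>_sub \<nu>_cons SP unfolding s_def by auto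
    then show ?thesis
      using Inr \<open>s \<subseteq> S\<close> \<open>S \<subseteq> {1..n}\<close> SP by auto
  qed
  then have "\<nu> \<union> ?T \<in> polar_complex n C"
    using ext[OF \<open>s \<subseteq> S\<close>] unfolding polar_complex_def by blast
  moreover have "\<nu> \<inter> ?T = {}" using \<nu>_sub SP by auto
  ultimately show "\<nu> \<in> link ?T (polar_complex n C)"
    unfolding link_def polar_complex_def by blast
qed

lemma mem_cham_if_sign_extensions_in_code:
  assumes C: "C \<subseteq> Pow {1..n}" and SP: "S \<inter> P = {}"
    and ext: "\<And>s. s \<subseteq> S \<Longrightarrow> s \<union> P \<in> C"
  shows "S \<in> cham n C"
proof -
  define T where "T = Inl ` P \<union> Inr ` ({1..n} - S - P)"
  have "P \<in> C" using ext[of "{}"] by simp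
  moreover have "T \<subseteq> polar_face n P" unfolding T_def by auto
  ultimately have "T \<in> polar_complex n C" unfolding polar_complex_def by blast
  moreover have "P \<subseteq> {1..n}" using \<open>P \<in> C\<close> C by blast
  then have "supp T = {1..n} - S" using SP unfolding T_def supp_def by auto
  ultimately show ?thesis
    using link_sign_vector_subset_full_polar[OF C] full_polar_subset_link_sign_vector[OF assms]
    unfolding cham_def T_def by blast
qed

lemma hcode_subset_Pow: "hcode n w h X \<subseteq> Pow {1..n}"
  by (auto simp: hcode_def)

lemma stable_pair_active_hyps_mem_cham:
  assumes "stable_pair n w h X" and "y \<in> X"
  shows "active_hyps n w h y \<in> cham n (hcode n w h X)"
proof (rule mem_cham_if_sign_extensions_in_code[OF hcode_subset_Pow])
  show "active_hyps n w h y \<inter> {j \<in> {1..n}. h j < w j \<bullet> y} = {}"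
    by (auto simp: active_hyps_def)
next
  fix s assume "s \<subseteq> active_hyps n w h y"
  then show "s \<union> {j \<in> {1..n}. h j < w j \<bullet> y} \<in> hcode n w h X"
    using stable_pair_atom_near_point[OF assms] by (auto simp: hcode_def active_hyps_def)
qed

lemma supp_eq_if_link_eq_full_polar:
  assumes C: "C \<subseteq> Pow {1..n}" and T: "T \<in> polar_complex n C"
    and L: "link T (polar_complex n C) = full_polar \<sigma>"
  shows "\<sigma> \<subseteq> {1..n}" and "supp T = {1..n} - \<sigma>"
proof -
  have single_link: "{v} \<in> link T (polar_complex n C)" if "v \<in> Inl ` \<sigma> \<union> Inr ` \<sigma>" for v
    using that unfolding L full_polar_def by auto
  show "\<sigma> \<subseteq> {1..n}"
  proof
    fix i assume "i \<in> \<sigma>"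
    then have "{Inl i} \<in> polar_complex n C" using single_link[of "Inl i"] by (simp add: link_def)
    then obtain \<tau> where "\<tau> \<in> C" "i \<in> \<tau>" unfolding polar_complex_def by auto
    then show "i \<in> {1..n}" using C by blast
  qed
  obtain \<tau> where \<tau>: "\<tau> \<in> C" "T \<subseteq> polar_face n \<tau>"
    using T unfolding polar_complex_def by blast
  have "i \<in> {1..n} - \<sigma>" if "i \<in> supp T" for i
  proof -
    have "Inl i \<in> T \<or> Inr i \<in> T" using that unfolding supp_def by simp
    moreover have "i \<notin> \<sigma>"
      using single_link[of "Inl i"] single_link[of "Inr i"] calculation by (auto simp: link_def)
    moreover have "i \<in> \<tau> \<or> i \<in> {1..n}" using calculation(1) \<tau>(2) by auto
    ultimately show ?thesis using \<tau>(1) C by blast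
  qed
  moreover have "i \<in> supp T" if i: "i \<in> {1..n} - \<sigma>" for i
  proof (rule ccontr)
    assume "i \<notin> supp T"
    define v where "v = (if i \<in> \<tau> then Inl i else Inr i)"
    have "{v} \<union> T \<subseteq> polar_face n \<tau>" using \<tau>(2) i unfolding v_def by auto
    then have "{v} \<in> link T (polar_complex n C)"
      using \<tau>(1) \<open>i \<notin> supp T\<close> unfolding link_def polar_complex_def supp_def v_def by auto
    then show False using i unfolding L full_polar_def v_def by (auto split: if_splits)
  qed
  ultimately show "supp T = {1..n} - \<sigma>" by blast
qed

lemma convex_point_realizing_link:
  assumes X: "convex X" and T: "T \<in> polar_complex n (hcode n w h X)"
    and L: "link T (polar_complex n (hcode n w h X)) = full_polar \<sigma>"
  shows "\<exists>x\<in>X. (\<forall>i\<in>\<sigma>. w i \<bullet> x = h i) \<and> (\<forall>j. Inl j \<in> T \<longrightarrow> h j < w j \<bullet> x)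
    \<and> (\<forall>j. Inr j \<in> T \<longrightarrow> w j \<bullet> x \<le> h j)"
proof -
  define K where "K = X \<inter> (\<Inter>j\<in>{j. Inl j \<in> T}. {x. h j < w j \<bullet> x})
    \<inter> (\<Inter>j\<in>{j. Inr j \<in> T}. {x. w j \<bullet> x \<le> h j})"
  have "convex K"
    unfolding K_def by (intro convex_Int X convex_INT convex_halfspace_gt convex_halfspace_le)
  have "finite \<sigma>"
    using supp_eq_if_link_eq_full_polar(1)[OF hcode_subset_Pow T L] finite_subset by blast
  moreover have "\<exists>x\<in>K. (\<forall>i\<in>r. h i < w i \<bullet> x) \<and> (\<forall>i\<in>\<sigma> - r. w i \<bullet> x \<le> h i)"
    if "r \<subseteq> \<sigma>" for r
  proof -
    define F where "F = Inl ` r \<union> Inr ` (\<sigma> - r) \<union> T"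
    have "Inl ` r \<union> Inr ` (\<sigma> - r) \<in> link T (polar_complex n (hcode n w h X))"
      using that unfolding L full_polar_def by auto
    then have "F \<in> polar_complex n (hcode n w h X)" unfolding link_def F_def by blast
    then obtain \<tau> x where F: "F \<subseteq> polar_face n \<tau>" and x: "x \<in> atom n w h X \<tau>"
      unfolding polar_complex_def hcode_def by blast
    have pos: "h j < w j \<bullet> x" if "Inl j \<in> F" for j
      using subsetD[OF F that] x unfolding mem_atom by simp
    have nonpos: "w j \<bullet> x \<le> h j" if "Inr j \<in> F" for j
      using subsetD[OF F that] x unfolding mem_atom by simp
    have "x \<in> K" using pos nonpos x unfolding K_def F_def mem_atom by blast
    moreover have "\<forall>i\<in>r. h i < w i \<bullet> x" "\<forall>i\<in>\<sigma> - r. w i \<bullet> x \<le> h i"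
      using pos nonpos unfolding F_def by auto
    ultimately show ?thesis by blast
  qed
  ultimately obtain x where "x \<in> K" "\<forall>i\<in>\<sigma>. w i \<bullet> x = h i"
    using convex_common_zero_of_sign_patterns[OF \<open>convex K\<close>] by blast
  then show ?thesis unfolding K_def by blast
qed

lemma polar_faces_same_supp_opposite_sign:
  assumes "supp T1 = supp T2" and "T1 \<noteq> T2"
  obtains j where "Inl j \<in> T1" "Inr j \<in> T2" | j where "Inl j \<in> T2" "Inr j \<in> T1"
proof -
  have same: "Inl j \<in> T1 \<or> Inr j \<in> T1 \<longleftrightarrow> Inl j \<in> T2 \<or> Inr j \<in> T2" for j
    using assms(1) unfolding supp_def set_eq_iff by simp
  from \<open>T1 \<noteq> T2\<close> obtain e where "e \<in> T1 - T2 \<or> e \<in> T2 - T1" by blast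
  then show ?thesis using same that by (cases e) blast+
qed

lemma stable_pair_opposite_link_signs_extend_chamber:
  assumes st: "stable_pair n w h X"
    and Ta: "Ta \<in> polar_complex n (hcode n w h X)"
    and La: "link Ta (polar_complex n (hcode n w h X)) = full_polar \<sigma>"
    and Tb: "Tb \<in> polar_complex n (hcode n w h X)"
    and Lb: "link Tb (polar_complex n (hcode n w h X)) = full_polar \<sigma>"
    and j: "Inl j \<in> Ta" "Inr j \<in> Tb"
  shows "\<exists>\<tau>\<in>cham n (hcode n w h X). \<sigma> \<subset> \<tau>"
proof -
  have X: "convex X" using st by (simp add: stable_pair_def)
  obtain xa where xa: "xa \<in> X" "\<forall>i\<in>\<sigma>. w i \<bullet> xa = h i" "h j < w j \<bullet> xa"
    using convex_point_realizing_link[OF X Ta La] j(1) by blast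
  obtain xb where xb: "xb \<in> X" "\<forall>i\<in>\<sigma>. w i \<bullet> xb = h i" "w j \<bullet> xb \<le> h j"
    using convex_point_realizing_link[OF X Tb Lb] j(2) by blast
  have \<sigma>: "\<sigma> \<subseteq> {1..n}" "j \<in> {1..n} - \<sigma>"
    using supp_eq_if_link_eq_full_polar[OF hcode_subset_Pow Ta La] j(1) by (auto simp: supp_def)
  obtain y where y: "y \<in> X" "w j \<bullet> y = h j"
    and eq: "\<forall>i. w i \<bullet> xa = h i \<and> w i \<bullet> xb = h i \<longrightarrow> w i \<bullet> y = h i"
    using convex_segment_hits_hyperplane[where w = w and h = h, OF X xa(1) xb(1) xa(3) xb(3)]
    by blast
  have "insert j \<sigma> \<subseteq> active_hyps n w h y"
    using \<sigma> y(2) eq xa(2) xb(2) unfolding active_hyps_def by blast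
  moreover have "\<sigma> \<subset> insert j \<sigma>" using \<sigma>(2) by blast
  ultimately show ?thesis using stable_pair_active_hyps_mem_cham[OF st y(1)] by blast
qed

theorem theoremC:
  fixes n :: nat and w :: "nat \<Rightarrow> 'a::euclidean_space" and h :: "nat \<Rightarrow> real" and X :: "'a set"
  assumes "stable_pair n w h X"
  shows "\<not> (\<exists>\<sigma>. chamber_obstruction n (hcode n w h X) \<sigma>)"
proof
  let ?\<Gamma> = "polar_complex n (hcode n w h X)"
  assume "\<exists>\<sigma>. chamber_obstruction n (hcode n w h X) \<sigma>"
  then obtain \<sigma> T1 T2
    where max: "\<forall>\<tau>\<in>cham n (hcode n w h X). \<sigma> \<subseteq> \<tau> \<longrightarrow> \<tau> = \<sigma>"
      and T1: "T1 \<in> ?\<Gamma>" "link T1 ?\<Gamma> = full_polar \<sigma>"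
      and T2: "T2 \<in> ?\<Gamma>" "link T2 ?\<Gamma> = full_polar \<sigma>"
      and "T1 \<noteq> T2"
    unfolding chamber_obstruction_def by blast
  have "supp T1 = supp T2"
    using supp_eq_if_link_eq_full_polar(2)[OF hcode_subset_Pow] T1 T2 by metis
  then show False
  proof (rule polar_faces_same_supp_opposite_sign[OF _ \<open>T1 \<noteq> T2\<close>])
    fix j assume "Inl j \<in> T1" "Inr j \<in> T2"
    then show False
      using stable_pair_opposite_link_signs_extend_chamber[OF assms T1 T2] max by blast
  next
    fix j assume "Inl j \<in> T2" "Inr j \<in> T1"
    then show False
      using stable_pair_opposite_link_signs_extend_chamber[OF assms T2 T1] max by blast
  qed
qed

end
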